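(* Let $n\ge 1$ and let $S\subseteq[n]$ with $n\in S$, and write $r(S)=(r_1,\dots,r_{2m})$. Then for every positive integer $t$, $$i(\mathrm{SM}_n(S),t)=\sum_{(c_1,\dots,c_m)}\ \prod_{j=1}^m F(r_{2j-1},r_{2j},c_j,t),$$ where the sum ranges over all integer vectors $(c_1,\dots,c_m)\in\mathbb Z^m$ such that $c_1+\dots+c_m=0$ and, for every $1\le j\le m$, $-t v_j\le c_j\le t u_j$ and $c_1+\dots+c_j\ge 0$.
   Context: For $S,T\subseteq[n]$, write $T\le S$ if $|T|=|S|$ and, for each $1\le i\le |T|$, the $i$-th smallest element of $T$ is at most the $i$-th smallest element of $S$. The Schubert matroid $\mathrm{SM}_n(S)$ is the matroid on ground set $[n]=\{1,\dots,n\}$ whose bases are $\{T\subseteq[n]: T\le S\}$. For a matroid $M$ on $[n]$ with set of bases $\mathcal B$, its matroid polytope is $\mathcal P(M)=\mathrm{conv}\{e_B: B\in\mathcal B\}\subset\mathbb R^n$, where $e_B=\sum_{b\in B}e_b$ and $e_1,\dots,e_n$ is the standard basis; $i(M,t)$ denotes the number of lattice points $|t\mathcal P(M)\cap\mathbb Z^n|$ of the $t$-th dilate (this is a polynomial in $t$, the Ehrhart polynomial). For $S\subseteq[n]$ with $n\in S$, the indicator vector of $S$ can be written uniquely as $(0^{r_1},1^{r_2},0^{r_3},1^{r_4},\dots,0^{r_{2m-1}},1^{r_{2m}})$, where $x^p$ denotes $p$ consecutive copies of $x$, $r_1\ge0$ and $r_i>0$ for $i\ge2$; set $r(S)=(r_1,\dots,r_{2m})$.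 Given $r(S)=(r_1,\dots,r_{2m})$, define for $1\le i\le m$: $u_i=\min\{r_{2i-1},\sum_{j=i+1}^m r_{2j}\}$ and $v_i=\min\{r_{2i},\sum_{j=1}^{i-1}r_{2j-1}\}$ (empty sums are $0$). For integers $a,b\ge0$ with $a+b\ge1$, $c\in\mathbb Z$ and $t\ge0$, define $$F(a,b,c,t)=\sum_{j=0}^{a+b}(-1)^j\binom{a+b}{j}\binom{(t+1)(b-j)+a+c-1}{a+b-1},$$ with the conventions $\binom00=1$ and $\binom NK=0$ whenever $K<0$ or $N<K$ (for any integers $N,K$). *)

theory Defs
  imports "HOL-Analysis.Analysis"
begin

definition gale_le :: "nat set \<Rightarrow> nat set \<Rightarrow> bool" where
  "gale_le T S \<longleftrightarrow> card T = card S \<and>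
     (\<forall>i < card S. sorted_list_of_set T ! i \<le> sorted_list_of_set S ! i)"

definition schubert_bases :: "nat \<Rightarrow> nat set \<Rightarrow> nat set set" where
  "schubert_bases n S = {T. T \<subseteq> {1..n} \<and> gale_le T S}"

text \<open>Matroid polytope: convex hull of the indicator vectors e_B of the bases,
  points of R^n represented as functions nat \<Rightarrow> real (coordinates outside [n] are 0).\<close>
definition matroid_polytope :: "nat set set \<Rightarrow> (nat \<Rightarrow> real) set" where
  "matroid_polytope Bs = {x. \<exists>l :: nat set \<Rightarrow> real. (\<forall>B\<in>Bs. 0 \<le> l B) \<and> (\<Sum>B\<in>Bs. l B) = 1
        \<and> x = (\<lambda>i. \<Sum>B\<in>Bs. l B * indicator B i)}"

definition lattice_count :: "(nat \<Rightarrow> real) set \<Rightarrow> nat \<Rightarrow> nat" where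
  "lattice_count P t = card {y. (\<forall>i. y i \<in> \<int>) \<and> (\<exists>x\<in>P. y = (\<lambda>i. real t * x i))}"

definition ehrhart_schubert :: "nat \<Rightarrow> nat set \<Rightarrow> nat \<Rightarrow> nat" where
  "ehrhart_schubert n S t = lattice_count (matroid_polytope (schubert_bases n S)) t"

text \<open>rs = r(S) (0-indexed list, so r_k = rs ! (k-1)): the indicator vector of S on [n]
  equals 0^{r_1} 1^{r_2} ... 0^{r_{2m-1}} 1^{r_{2m}}, with r_1 \<ge> 0 and r_i > 0 for i \<ge> 2.\<close>
definition is_r_of :: "nat \<Rightarrow> nat set \<Rightarrow> nat list \<Rightarrow> bool" where
  "is_r_of n S rs \<longleftrightarrow> even (length rs) \<and> (\<forall>k. 1 \<le> k \<and> k < length rs \<longrightarrow> 0 < rs ! k) \<and>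
     map (\<lambda>i. i \<in> S) [1..<n+1] = concat (map (\<lambda>k. replicate (rs ! k) (odd k)) [0..<length rs])"

definition rr :: "nat list \<Rightarrow> nat \<Rightarrow> nat" where
  "rr rs k = rs ! (k - 1)"

definition u_of :: "nat list \<Rightarrow> nat \<Rightarrow> nat" where
  "u_of rs i = min (rr rs (2*i - 1)) (\<Sum>j\<in>{i+1..length rs div 2}. rr rs (2*j))"

definition v_of :: "nat list \<Rightarrow> nat \<Rightarrow> nat" where
  "v_of rs i = min (rr rs (2*i)) (\<Sum>j\<in>{1..<i}. rr rs (2*j - 1))"

definition ibinom :: "int \<Rightarrow> int \<Rightarrow> int" where
  "ibinom N K = (if K < 0 \<or> N < K then 0 else int (nat N choose nat K))"

definition FF :: "nat \<Rightarrow> nat \<Rightarrow> int \<Rightarrow> nat \<Rightarrow> int" where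
  "FF a b c t = (\<Sum>j = 0..a+b. (-1)^j * int ((a+b) choose j) *
       ibinom ((int t + 1) * (int b - int j) + int a + c - 1) (int a + int b - 1))"

definition admissible_c :: "nat list \<Rightarrow> nat \<Rightarrow> int list set" where
  "admissible_c rs t = {cs. length cs = length rs div 2 \<and> sum_list cs = 0 \<and>
      (\<forall>j\<in>{1..length rs div 2}.
          - (int t * int (v_of rs j)) \<le> cs ! (j-1) \<and> cs ! (j-1) \<le> int t * int (u_of rs j)
          \<and> 0 \<le> sum_list (take j cs))}"

end

theory Submission
  imports Defs
begin

text \<open>A lattice point of the \<open>t\<close>-th dilate of the polytope of \<open>SM_n(S)\<close> is a vector
  \<open>y \<in> {0,\<dots>,t}^n\<close> whose prefix sums dominate \<open>t\<close> times the prefix counts of \<open>S\<close>, with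
  equality at the end. Necessity: \<open>T \<le> S\<close> in the Gale order says exactly that \<open>T\<close> has at least as
  many elements as \<open>S\<close> below every threshold, and such linear inequalities survive convex
  combinations. Sufficiency: cut \<open>[0, y_1 + \<dots> + y_n)\<close> into consecutive intervals of lengths
  \<open>y_i\<close> and let \<open>B_r\<close> collect the positions whose interval meets the residue class of \<open>r\<close>
  modulo \<open>t\<close>; each \<open>B_r\<close> is a basis and \<open>y = e_{B_0} + \<dots> + e_{B_{t-1}}\<close>.

  To count these vectors, cut \<open>y\<close> along the blocks \<open>0^{r_{2j-1}} 1^{r_{2j}}\<close> of \<open>S\<close> and let
  \<open>c_j\<close> be the excess of the \<open>j\<close>-th block sum over \<open>t r_{2j}\<close>. Inside a block the domination
  condition only has to be checked at its two ends, where the surplus is a prefix sum of the \<open>c_i\<close>;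
  the vectors in \<open>{0,\<dots>,t}^L\<close> with prescribed sum are counted by inclusion--exclusion, which gives
  \<open>F\<close>. Finally the bounds \<open>-t v_j \<le> c_j \<le> t u_j\<close> are implied by the block bounds
  \<open>-t r_{2j} \<le> c_j \<le> t r_{2j-1}\<close> together with the prefix conditions.\<close>

section \<open>Vectors with bounded entries and prescribed sum\<close>

definition bounded_vectors :: "nat \<Rightarrow> nat \<Rightarrow> int \<Rightarrow> nat list set" where
  "bounded_vectors t L d = {ys. length ys = L \<and> (\<forall>y\<in>set ys. y \<le> t) \<and> int (sum_list ys) = d}"

definition weak_compositions_count :: "nat \<Rightarrow> int \<Rightarrow> int" where
  "weak_compositions_count L s = ibinom (s + int L - 1) (int L - 1)"

text \<open>Inclusion--exclusion over the parts that exceed \<open>t\<close>.\<close>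
definition bounded_compositions_count :: "nat \<Rightarrow> nat \<Rightarrow> int \<Rightarrow> int" where
  "bounded_compositions_count t L d =
     (\<Sum>j\<le>L. (-1)^j * int (L choose j) * weak_compositions_count L (d - (int t + 1) * int j))"

lemma finite_lists_bounded: "finite {ys :: nat list. length ys = L \<and> (\<forall>y\<in>set ys. y \<le> t)}"
  using finite_lists_length_eq[of "{0..t}" L] by (simp add: subset_iff conj_commute Ball_def)

lemma finite_bounded_vectors: "finite (bounded_vectors t L d)"
  by (rule finite_subset[OF _ finite_lists_bounded[of L t]]) (auto simp: bounded_vectors_def)

lemma card_bounded_vectors_Suc:
  "card (bounded_vectors t (Suc L) d) = (\<Sum>y\<in>{0..t}. card (bounded_vectors t L (d - int y)))"
proof -
  have split: "bounded_vectors t (Suc L) d = (\<Union>y\<in>{0..t}. (#) y ` bounded_vectors t L (d - int y))"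
    unfolding bounded_vectors_def by (rule set_eqI) (auto simp: length_Suc_conv image_iff)
  show ?thesis unfolding split
    by (subst card_UN_disjoint) (auto simp: finite_bounded_vectors card_image)
qed

lemma card_bounded_vectors_1: "card (bounded_vectors t 1 d) = (if 0 \<le> d \<and> d \<le> int t then 1 else 0)"
proof -
  have "bounded_vectors t 1 d = (if 0 \<le> d \<and> d \<le> int t then {[nat d]} else {})"
    unfolding bounded_vectors_def by (rule set_eqI) (auto simp: length_Suc_conv)
  then show ?thesis by simp
qed

lemma weak_compositions_count_1: "weak_compositions_count 1 s = (if 0 \<le> s then 1 else 0)"
  unfolding weak_compositions_count_def ibinom_def by auto

lemma weak_compositions_count_diff:
  assumes "1 \<le> L"
  shows "weak_compositions_count (Suc L) s - weak_compositions_count (Suc L) (s - 1) =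
    weak_compositions_count L s"
proof (cases "s \<ge> 1")
  case True
  define N where "N = nat (s + int L - 1)"
  have N: "s + int L - 1 = int N" using True unfolding N_def by simp
  obtain L' where L': "L = Suc L'" using assms by (cases L) auto
  show ?thesis
    using True N unfolding weak_compositions_count_def ibinom_def L'
    by (auto simp: nat_add_distrib)
next
  case False
  then consider "s = 0" | "s < 0" by linarith
  then show ?thesis unfolding weak_compositions_count_def ibinom_def using assms by cases auto
qed

lemma sum_weak_compositions_count:
  assumes "1 \<le> L"
  shows "(\<Sum>y\<in>{0..t}. weak_compositions_count L (s - int y)) =
    weak_compositions_count (Suc L) s - weak_compositions_count (Suc L) (s - int t - 1)"
proof (induction t)
  case 0
  then show ?case using weak_compositions_count_diff[OF assms, of s] by simp
next
  case (Suc t)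
  then show ?case
    using weak_compositions_count_diff[OF assms, of "s - int t - 1"] by (simp add: algebra_simps)
qed

lemma sum_bounded_compositions_count:
  assumes "1 \<le> L"
  shows "(\<Sum>y\<in>{0..t}. bounded_compositions_count t L (d - int y)) = bounded_compositions_count t (Suc L) d"
proof -
  define g where "g j = weak_compositions_count (Suc L) (d - (int t + 1) * int j)" for j
  define sgn_binom where "sgn_binom K j = (-1)^j * int (K choose j)" for K j :: nat
  have pascal: "sgn_binom (Suc L) (Suc j) = sgn_binom L (Suc j) - sgn_binom L j" for j
    by (simp add: sgn_binom_def algebra_simps)
  have "(\<Sum>y\<in>{0..t}. bounded_compositions_count t L (d - int y)) =
      (\<Sum>j\<le>L. sgn_binom L j * (\<Sum>y\<in>{0..t}. weak_compositions_count L (d - (int t + 1) * int j - int y)))"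
    unfolding bounded_compositions_count_def sgn_binom_def
    by (subst sum.swap) (simp add: sum_distrib_left algebra_simps)
  also have "\<dots> = (\<Sum>j\<le>L. sgn_binom L j * g j) - (\<Sum>j\<le>L. sgn_binom L j * g (Suc j))"
    unfolding sum_subtractf[symmetric]
    by (rule sum.cong[OF refl], subst sum_weak_compositions_count[OF assms])
       (simp add: g_def algebra_simps)
  also have "(\<Sum>j\<le>L. sgn_binom L j * g j) = (\<Sum>j\<le>Suc L. sgn_binom L j * g j)"
    by (simp add: sgn_binom_def)
  also have "\<dots> = g 0 + (\<Sum>j\<le>L. sgn_binom L (Suc j) * g (Suc j))"
    by (subst sum.atMost_Suc_shift) (simp add: sgn_binom_def)
  also have "g 0 + (\<Sum>j\<le>L. sgn_binom L (Suc j) * g (Suc j)) - (\<Sum>j\<le>L. sgn_binom L j * g (Suc j)) =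
      g 0 + (\<Sum>j\<le>L. sgn_binom (Suc L) (Suc j) * g (Suc j))"
    by (simp add: pascal left_diff_distrib sum_subtractf)
  also have "\<dots> = (\<Sum>j\<le>Suc L. sgn_binom (Suc L) j * g j)"
    by (subst sum.atMost_Suc_shift) (simp add: sgn_binom_def)
  also have "\<dots> = bounded_compositions_count t (Suc L) d"
    unfolding bounded_compositions_count_def sgn_binom_def g_def ..
  finally show ?thesis .
qed

lemma card_bounded_vectors:
  assumes "1 \<le> L"
  shows "int (card (bounded_vectors t L d)) = bounded_compositions_count t L d"
  using assms
proof (induction L arbitrary: d rule: nat_induct_at_least)
  case base
  then show ?case
    using card_bounded_vectors_1[of t d] weak_compositions_count_1[of d]
      weak_compositions_count_1[of "d - (int t + 1)"]
    by (auto simp: bounded_compositions_count_def)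
next
  case (Suc L)
  have "int (card (bounded_vectors t (Suc L) d)) =
      (\<Sum>y\<in>{0..t}. int (card (bounded_vectors t L (d - int y))))"
    by (simp add: card_bounded_vectors_Suc)
  also have "\<dots> = bounded_compositions_count t (Suc L) d"
    using Suc by (simp add: sum_bounded_compositions_count)
  finally show ?case .
qed

lemma FF_eq_card_bounded_vectors:
  assumes "1 \<le> a + b"
  shows "FF a b c t = int (card (bounded_vectors t (a + b) (int t * int b + c)))"
proof -
  have "FF a b c t = bounded_compositions_count t (a + b) (int t * int b + c)"
    unfolding FF_def bounded_compositions_count_def weak_compositions_count_def atLeast0AtMost
    by (rule sum.cong[OF refl]) (simp add: algebra_simps)
  then show ?thesis using card_bounded_vectors[OF assms] by simp
qed

section \<open>The Gale order via prefix counts\<close>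

lemma sorted_list_of_set_nth_le_iff:
  fixes T :: "'a::linorder set"
  assumes "finite T" "i < card T"
  shows "sorted_list_of_set T ! i \<le> s \<longleftrightarrow> Suc i \<le> card {x\<in>T. x \<le> s}"
proof -
  define xs where "xs = sorted_list_of_set T"
  have set_xs: "set xs = T" and len: "length xs = card T" and dist: "distinct xs" and sorted: "sorted xs"
    using assms unfolding xs_def by auto
  have fin: "finite {x\<in>T. x \<le> s}" using assms by simp
  show ?thesis
  proof
    assume le: "sorted_list_of_set T ! i \<le> s"
    have "(!) xs ` {0..i} \<subseteq> {x\<in>T. x \<le> s}"
    proof
      fix y assume "y \<in> (!) xs ` {0..i}"
      then obtain k where k: "k \<le> i" "y = xs ! k" by auto
      have "xs ! k \<le> xs ! i" using sorted_nth_mono[OF sorted k(1)] assms len by simp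
      moreover have "xs ! k \<in> T" using k assms len set_xs by auto
      ultimately show "y \<in> {x\<in>T. x \<le> s}" using k le assms len set_xs xs_def by auto
    qed
    moreover have "card ((!) xs ` {0..i}) = Suc i"
      by (subst card_image) (use inj_on_nth[OF dist] assms len in auto)
    ultimately show "Suc i \<le> card {x\<in>T. x \<le> s}" using card_mono[OF fin] by metis
  next
    assume le: "Suc i \<le> card {x\<in>T. x \<le> s}"
    show "sorted_list_of_set T ! i \<le> s"
    proof (rule ccontr)
      assume "\<not> sorted_list_of_set T ! i \<le> s"
      then have gt: "s < xs ! i" unfolding xs_def by simp
      have "{x\<in>T. x \<le> s} \<subseteq> (!) xs ` {0..<i}"
      proof
        fix y assume y: "y \<in> {x\<in>T. x \<le> s}"
        then obtain k where k: "k < length xs" "y = xs ! k" using set_xs by (auto simp: in_set_conv_nth)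
        have "k < i"
        proof (rule ccontr)
          assume "\<not> k < i"
          then have "xs ! i \<le> xs ! k" using sorted_nth_mono[OF sorted] k by simp
          then have "xs ! i \<le> s" using y k by (auto intro: order.trans)
          then show False using gt by simp
        qed
        then show "y \<in> (!) xs ` {0..<i}" using k by auto
      qed
      then have "card {x\<in>T. x \<le> s} \<le> card ((!) xs ` {0..<i})" by (rule card_mono[rotated]) simp
      also have "\<dots> \<le> i" using card_image_le[of "{0..<i}" "(!) xs"] by simp
      finally show False using le by simp
    qed
  qed
qed

lemma gale_le_iff_card_le_prefix:
  assumes "finite T" "finite S"
  shows "gale_le T S \<longleftrightarrow>
    card T = card S \<and> (\<forall>s. card {x\<in>S. x \<le> s} \<le> card {x\<in>T. x \<le> s})"
proof (intro iffI conjI allI)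
  assume gale: "gale_le T S"
  then show card_eq: "card T = card S" unfolding gale_le_def by simp
  fix s
  show "card {x\<in>S. x \<le> s} \<le> card {x\<in>T. x \<le> s}"
  proof (cases "card {x\<in>S. x \<le> s}")
    case 0
    then show ?thesis by (metis le0)
  next
    case (Suc i)
    have "card {x\<in>S. x \<le> s} \<le> card S" using assms by (intro card_mono) auto
    then have i: "i < card S" using Suc by simp
    then have "sorted_list_of_set S ! i \<le> s"
      using sorted_list_of_set_nth_le_iff[OF assms(2)] Suc by simp
    then have "sorted_list_of_set T ! i \<le> s"
      using gale i unfolding gale_le_def by (meson order_trans)
    then show ?thesis
      using sorted_list_of_set_nth_le_iff[OF assms(1)] i card_eq Suc by simp
  qed
next
  assume prefix: "card T = card S \<and> (\<forall>s. card {x\<in>S. x \<le> s} \<le> card {x\<in>T. x \<le> s})"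
  show "gale_le T S" unfolding gale_le_def
  proof (intro conjI allI impI)
    show "card T = card S" using prefix by simp
    fix i assume i: "i < card S"
    define s where "s = sorted_list_of_set S ! i"
    have "Suc i \<le> card {x\<in>S. x \<le> s}" using sorted_list_of_set_nth_le_iff[OF assms(2) i, of s] unfolding s_def by simp
    also have "\<dots> \<le> card {x\<in>T. x \<le> s}" using prefix by simp
    finally show "sorted_list_of_set T ! i \<le> s"
      using sorted_list_of_set_nth_le_iff[OF assms(1), of i s] i prefix by simp
  qed
qed

lemma mem_schubert_bases_iff:
  assumes "S \<subseteq> {1..n}"
  shows "B \<in> schubert_bases n S \<longleftrightarrow>
    B \<subseteq> {1..n} \<and> card B = card S \<and> (\<forall>j. card (S \<inter> {1..j}) \<le> card (B \<inter> {1..j}))"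
proof (cases "B \<subseteq> {1..n}")
  case True
  have prefix: "X \<subseteq> {1..n} \<Longrightarrow> {x\<in>X. x \<le> j} = X \<inter> {1..j}" for X :: "nat set" and j
    by auto
  have "gale_le B S \<longleftrightarrow> card B = card S \<and> (\<forall>j. card (S \<inter> {1..j}) \<le> card (B \<inter> {1..j}))"
    using gale_le_iff_card_le_prefix[OF finite_subset[OF True] finite_subset[OF assms]]
    by (simp add: prefix[OF True] prefix[OF assms])
  then show ?thesis using True unfolding schubert_bases_def by simp
qed (simp add: schubert_bases_def)

lemma finite_schubert_bases: "finite (schubert_bases n S)"
  by (rule finite_subset[of _ "Pow {1..n}"]) (auto simp: schubert_bases_def)

section \<open>Lattice points of the dilated polytope\<close>

lemma inj_on_mod_interval:
  fixes t :: nat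
  assumes "l \<le> t"
  shows "inj_on (\<lambda>u. u mod t) {a..<a+l}"
proof (rule inj_onI)
  have eq: "u = u'" if "u \<in> {a..<a+l}" "u' \<in> {a..<a+l}" "u mod t = u' mod t" "u \<le> u'" for u u'
  proof -
    have "t dvd u' - u" using that mod_eq_dvd_iff_nat[of u u' t] by simp
    moreover have "u' - u < t" using that assms by simp
    ultimately have "u' - u = 0" by (metis dvd_imp_le not_less neq0_conv)
    then show ?thesis using that by simp
  qed
  fix u u' assume "u \<in> {a..<a+l}" "u' \<in> {a..<a+l}" "u mod t = u' mod t"
  then show "u = u'" using eq[of u u'] eq[of u' u] by (cases "u \<le> u'") auto
qed

lemma card_residue_class_lessThan_mult:
  fixes t :: nat
  assumes "r < t"
  shows "card {u. u < t * q \<and> u mod t = r} = q"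
proof -
  have "{u. u < t * q \<and> u mod t = r} = (\<lambda>k. k * t + r) ` {..<q}"
  proof (rule set_eqI, rule iffI)
    fix u assume u: "u \<in> {u. u < t * q \<and> u mod t = r}"
    then have "u = (u div t) * t + r" using div_mult_mod_eq[of u t] by simp
    moreover have "u div t < q" using u less_mult_imp_div_less[of u q t] by (simp add: mult.commute)
    ultimately show "u \<in> (\<lambda>k. k * t + r) ` {..<q}" by blast
  next
    fix u assume "u \<in> (\<lambda>k. k * t + r) ` {..<q}"
    then obtain k where k: "k < q" "u = k * t + r" by auto
    have "k * t + r < Suc k * t" using assms by simp
    also have "\<dots> \<le> t * q" using k by (metis Suc_leI mult.commute mult_le_mono1)
    finally show "u \<in> {u. u < t * q \<and> u mod t = r}" using k assms by simp
  qed
  moreover have "inj_on (\<lambda>k. k * t + r) {..<q}" using assms by (intro inj_onI) simp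
  ultimately show ?thesis by (simp add: card_image)
qed

lemma card_residue_class_lessThan_ge:
  fixes t :: nat
  assumes "r < t"
  shows "N div t \<le> card {u. u < N \<and> u mod t = r}"
proof -
  have le: "t * (N div t) \<le> N" by simp
  have "{u. u < t * (N div t) \<and> u mod t = r} \<subseteq> {u. u < N \<and> u mod t = r}"
    by (auto intro: less_le_trans[OF _ le])
  then have "card {u. u < t * (N div t) \<and> u mod t = r} \<le> card {u. u < N \<and> u mod t = r}"
    by (rule card_mono[rotated]) simp
  then show ?thesis using card_residue_class_lessThan_mult[OF assms] by simp
qed

definition prefix_sum :: "nat list \<Rightarrow> nat \<Rightarrow> nat" where
  "prefix_sum ys k = sum_list (take k ys)"

lemma prefix_sum_Suc: "k < length ys \<Longrightarrow> prefix_sum ys (Suc k) = prefix_sum ys k + ys ! k"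
  unfolding prefix_sum_def by (simp add: take_Suc_conv_app_nth)

definition residue_positions :: "nat \<Rightarrow> nat list \<Rightarrow> nat \<Rightarrow> nat set" where
  "residue_positions t ys r = {i \<in> {1..length ys}.
     \<exists>u. prefix_sum ys (i - 1) \<le> u \<and> u < prefix_sum ys i \<and> u mod t = r}"

lemma card_residue_positions_prefix:
  assumes "\<forall>y\<in>set ys. y \<le> t" "j \<le> length ys"
  shows "card (residue_positions t ys r \<inter> {1..j}) = card {u. u < prefix_sum ys j \<and> u mod t = r}"
  using assms(2)
proof (induction j)
  case 0
  then show ?case by (simp add: prefix_sum_def)
next
  case (Suc j)
  have j: "j < length ys" using Suc.prems by simp
  define I where "I = {u \<in> {prefix_sum ys j..<prefix_sum ys j + ys ! j}. u mod t = r}"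
  have step: "prefix_sum ys (Suc j) = prefix_sum ys j + ys ! j" by (rule prefix_sum_Suc[OF j])
  have mem: "Suc j \<in> residue_positions t ys r \<longleftrightarrow> I \<noteq> {}"
    unfolding residue_positions_def I_def using j step by auto
  have "card I \<le> 1"
  proof -
    have "ys ! j \<le> t" using assms(1) j by simp
    then have "inj_on (\<lambda>u. u mod t) I"
      unfolding I_def by (rule inj_on_subset[OF inj_on_mod_interval]) auto
    then have "card I = card ((\<lambda>u. u mod t) ` I)" by (rule card_image[symmetric])
    also have "\<dots> \<le> card {r}" by (rule card_mono) (auto simp: I_def)
    finally show ?thesis by simp
  qed
  moreover have "finite I" by (simp add: I_def)
  ultimately have card_I: "card I = (if I = {} then 0 else 1)"
    by (cases "I = {}") (simp_all add: le_Suc_eq)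
  have "residue_positions t ys r \<inter> {1..Suc j} =
      (residue_positions t ys r \<inter> {1..j}) \<union> (if I = {} then {} else {Suc j})"
    using mem by (auto simp: le_Suc_eq)
  then have "card (residue_positions t ys r \<inter> {1..Suc j}) =
      card (residue_positions t ys r \<inter> {1..j}) + card I"
    using card_I by (cases "I = {}") simp_all
  also have "\<dots> = card ({u. u < prefix_sum ys j \<and> u mod t = r} \<union> I)"
    using Suc by (subst card_Un_disjoint) (auto simp: I_def)
  also have "{u. u < prefix_sum ys j \<and> u mod t = r} \<union> I = {u. u < prefix_sum ys (Suc j) \<and> u mod t = r}"
    unfolding step I_def by auto
  finally show ?case .
qed

lemma card_residue_positions_containing:
  assumes "\<forall>y\<in>set ys. y \<le> t" "0 < t" "i \<in> {1..length ys}"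
  shows "card {r\<in>{..<t}. i \<in> residue_positions t ys r} = ys ! (i - 1)"
proof -
  have i: "i - 1 < length ys" "i = Suc (i - 1)" using assms(3) by auto
  have step: "prefix_sum ys i = prefix_sum ys (i - 1) + ys ! (i - 1)"
    using prefix_sum_Suc[OF i(1)] i(2) by simp
  have "{r\<in>{..<t}. i \<in> residue_positions t ys r} =
      (\<lambda>u. u mod t) ` {prefix_sum ys (i - 1)..<prefix_sum ys (i - 1) + ys ! (i - 1)}"
    unfolding residue_positions_def using assms(2,3) step by auto
  then show ?thesis
    using assms(1) i by (simp add: card_image[OF inj_on_mod_interval])
qed

definition dominating_points :: "nat \<Rightarrow> nat set \<Rightarrow> nat \<Rightarrow> nat list set" where
  "dominating_points n S t = {ys. length ys = n \<and> (\<forall>y\<in>set ys. y \<le> t) \<and>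
     (\<forall>j\<le>n. t * card (S \<inter> {1..j}) \<le> prefix_sum ys j) \<and> prefix_sum ys n = t * card S}"

definition vector_of_list :: "nat \<Rightarrow> nat list \<Rightarrow> nat \<Rightarrow> real" where
  "vector_of_list n ys i = (if i \<in> {1..n} then real (ys ! (i - 1)) else 0)"

lemma residue_positions_mem_schubert_bases:
  assumes S: "S \<subseteq> {1..n}" and t: "0 < t" and ys: "ys \<in> dominating_points n S t" and r: "r < t"
  shows "residue_positions t ys r \<in> schubert_bases n S"
proof -
  define B where "B = residue_positions t ys r"
  have len: "length ys = n" and bounded: "\<forall>y\<in>set ys. y \<le> t"
    and dom: "\<And>j. j \<le> n \<Longrightarrow> t * card (S \<inter> {1..j}) \<le> prefix_sum ys j"
    and total: "prefix_sum ys n = t * card S"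
    using ys unfolding dominating_points_def by auto
  have B_sub: "B \<subseteq> {1..n}" unfolding B_def residue_positions_def using len by auto
  have card_prefix: "card (B \<inter> {1..j}) = card {u. u < prefix_sum ys j \<and> u mod t = r}" if "j \<le> n" for j
    unfolding B_def using card_residue_positions_prefix[OF bounded] that len by simp
  have dom_n: "card (S \<inter> {1..j}) \<le> card (B \<inter> {1..j})" if j: "j \<le> n" for j
  proof -
    have "card (S \<inter> {1..j}) = (t * card (S \<inter> {1..j})) div t" using t by simp
    also have "\<dots> \<le> prefix_sum ys j div t" using dom[OF j] by (rule div_le_mono)
    also have "\<dots> \<le> card (B \<inter> {1..j})"
      unfolding card_prefix[OF j] by (rule card_residue_class_lessThan_ge[OF r])
    finally show ?thesis .
  qed
  have "card (S \<inter> {1..j}) \<le> card (B \<inter> {1..j})" for j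
  proof (cases "j \<le> n")
    case False
    then have "S \<inter> {1..j} = S \<inter> {1..n}" "B \<inter> {1..j} = B \<inter> {1..n}" using S B_sub by auto
    then show ?thesis using dom_n[of n] by simp
  qed (rule dom_n)
  moreover have "card B = card S"
  proof -
    have "card B = card (B \<inter> {1..n})" using B_sub by (simp add: Int_absorb2)
    also have "\<dots> = card S" unfolding card_prefix[OF order_refl] total
      by (rule card_residue_class_lessThan_mult[OF r])
    finally show ?thesis .
  qed
  ultimately show ?thesis using B_sub unfolding B_def mem_schubert_bases_iff[OF S] by blast
qed

lemma sum_indicator_residue_positions:
  assumes "\<forall>y\<in>set ys. y \<le> t" "0 < t"
  shows "(\<Sum>r<t. indicator (residue_positions t ys r) i :: real) = vector_of_list (length ys) ys i"
proof -
  have "(\<Sum>r<t. indicator (residue_positions t ys r) i :: real) =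
      real (card {r\<in>{..<t}. i \<in> residue_positions t ys r})"
    by (simp add: indicator_def of_bool_def sum.If_cases Int_def)
  also have "\<dots> = vector_of_list (length ys) ys i"
  proof (cases "i \<in> {1..length ys}")
    case True
    then show ?thesis
      using card_residue_positions_containing[OF assms] by (simp add: vector_of_list_def)
  next
    case False
    then have "{r\<in>{..<t}. i \<in> residue_positions t ys r} = {}"
      unfolding residue_positions_def by auto
    then show ?thesis using False by (auto simp: vector_of_list_def)
  qed
  finally show ?thesis .
qed

lemma sum_indicator_bases_mem_dilate:
  assumes "finite Bs" "0 < t" "\<And>r. r < t \<Longrightarrow> F r \<in> Bs"
  shows "\<exists>x\<in>matroid_polytope Bs. (\<lambda>i. \<Sum>r<t. indicator (F r) i) = (\<lambda>i. real t * x i)"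
proof -
  define mult where "mult B = real (card {r\<in>{..<t}. F r = B})" for B
  have group: "(\<Sum>B\<in>Bs. mult B * h B) = (\<Sum>r<t. h (F r))" for h :: "nat set \<Rightarrow> real"
  proof -
    have "(\<Sum>r<t. h (F r)) = (\<Sum>B\<in>Bs. \<Sum>r\<in>{r\<in>{..<t}. F r = B}. h (F r))"
      by (rule sum.group[symmetric]) (use assms in auto)
    then show ?thesis by (simp add: mult_def)
  qed
  define x where "x i = (\<Sum>B\<in>Bs. mult B / real t * indicator B i)" for i
  have "(\<Sum>B\<in>Bs. mult B / real t) = 1"
    using group[of "\<lambda>_. 1"] assms(2) by (simp add: sum_divide_distrib[symmetric])
  then have "x \<in> matroid_polytope Bs"
    unfolding matroid_polytope_def x_def
    by (intro CollectI exI[where x = "\<lambda>B. mult B / real t"]) (simp add: mult_def)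
  moreover have "(\<lambda>i. \<Sum>r<t. indicator (F r) i) = (\<lambda>i. real t * x i)"
    using group assms(2) by (simp add: x_def sum_distrib_left)
  ultimately show ?thesis by blast
qed

lemma dominating_point_mem_dilate:
  assumes S: "S \<subseteq> {1..n}" and t: "0 < t" and ys: "ys \<in> dominating_points n S t"
  shows "\<exists>x\<in>matroid_polytope (schubert_bases n S). vector_of_list n ys = (\<lambda>i. real t * x i)"
proof -
  have "length ys = n" "\<forall>y\<in>set ys. y \<le> t" using ys unfolding dominating_points_def by auto
  then have "vector_of_list n ys = (\<lambda>i. \<Sum>r<t. indicator (residue_positions t ys r) i)"
    using sum_indicator_residue_positions t by auto
  then show ?thesis
    using sum_indicator_bases_mem_dilate[OF finite_schubert_bases t]
      residue_positions_mem_schubert_bases[OF S t ys] by simp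
qed

lemma matroid_polytope_coordinate_bounds:
  assumes "x \<in> matroid_polytope Bs"
  shows "0 \<le> x i" "x i \<le> 1"
proof -
  obtain l where l_nonneg: "\<forall>B\<in>Bs. 0 \<le> l B" and l_sum: "(\<Sum>B\<in>Bs. l B) = 1"
    and x: "x = (\<lambda>i. \<Sum>B\<in>Bs. l B * indicator B i)"
    using assms unfolding matroid_polytope_def by blast
  show "0 \<le> x i" unfolding x using l_nonneg by (auto intro!: sum_nonneg)
  have "x i \<le> (\<Sum>B\<in>Bs. l B)" unfolding x
    by (rule sum_mono) (use l_nonneg in \<open>auto simp: indicator_def\<close>)
  then show "x i \<le> 1" using l_sum by simp
qed

lemma schubert_polytope_sums:
  fixes x :: "nat \<Rightarrow> real"
  assumes S: "S \<subseteq> {1..n}" and x: "x \<in> matroid_polytope (schubert_bases n S)"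
  shows "i \<notin> {1..n} \<Longrightarrow> x i = 0"
    and "card (S \<inter> {1..j}) \<le> (\<Sum>i\<in>{1..j}. x i)"
    and "(\<Sum>i\<in>{1..n}. x i) = card S"
proof -
  define Bs where "Bs = schubert_bases n S"
  obtain l where l_nonneg: "\<forall>B\<in>Bs. 0 \<le> l B" and l_sum: "(\<Sum>B\<in>Bs. l B) = 1"
    and x_eq: "x = (\<lambda>i. \<Sum>B\<in>Bs. l B * indicator B i)"
    using x unfolding matroid_polytope_def Bs_def by blast
  have B: "B \<subseteq> {1..n}" "card B = card S" "card (S \<inter> {1..j}) \<le> card (B \<inter> {1..j})"
    if "B \<in> Bs" for B j
    using that mem_schubert_bases_iff[OF S] unfolding Bs_def by auto
  show "i \<notin> {1..n} \<Longrightarrow> x i = 0"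
    unfolding x_eq by (intro sum.neutral) (auto simp: indicator_def dest!: B(1))
  have sum_x: "(\<Sum>i\<in>{1..j}. x i) = (\<Sum>B\<in>Bs. l B * real (card (B \<inter> {1..j})))" for j
    unfolding x_eq by (subst sum.swap) (simp add: sum_distrib_left[symmetric] indicator_def
      of_bool_def sum.If_cases Int_commute)
  have "real (card (S \<inter> {1..j})) = (\<Sum>B\<in>Bs. l B * real (card (S \<inter> {1..j})))"
    using l_sum by (simp add: sum_distrib_right[symmetric])
  also have "\<dots> \<le> (\<Sum>B\<in>Bs. l B * real (card (B \<inter> {1..j})))"
    using l_nonneg B(3) by (intro sum_mono mult_left_mono) auto
  finally show "card (S \<inter> {1..j}) \<le> (\<Sum>i\<in>{1..j}. x i)" unfolding sum_x .
  have "(\<Sum>i\<in>{1..n}. x i) = (\<Sum>B\<in>Bs. l B * real (card S))"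
    unfolding sum_x using B(1,2) by (intro sum.cong) (auto simp: Int_absorb2)
  then show "(\<Sum>i\<in>{1..n}. x i) = card S"
    using l_sum by (simp add: sum_distrib_right[symmetric])
qed

lemma prefix_sum_map_upt:
  assumes "j \<le> n"
  shows "prefix_sum (map f [1..<n+1]) j = (\<Sum>i\<in>{1..j}. f i)"
proof -
  have "take j [1..<n+1] = [1..<1+j]" by (rule take_upt) (use assms in simp)
  then have "prefix_sum (map f [1..<n+1]) j = sum_list (map f [1..<1+j])"
    unfolding prefix_sum_def by (simp only: take_map)
  also have "\<dots> = sum f (set [1..<1+j])" by (rule sum_set_upt_conv_sum_list_nat[symmetric])
  also have "set [1..<1+j] = {1..j}" by auto
  finally show ?thesis .
qed

lemma dilate_lattice_point_mem_image:
  assumes S: "S \<subseteq> {1..n}" and t: "0 < t" and y_int: "\<forall>i. y i \<in> \<int>"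
    and x: "x \<in> matroid_polytope (schubert_bases n S)" and y: "y = (\<lambda>i. real t * x i)"
  shows "y \<in> vector_of_list n ` dominating_points n S t"
proof -
  define ys where "ys = map (\<lambda>i. nat \<lfloor>y i\<rfloor>) [1..<n+1]"
  have y_nat: "real (nat \<lfloor>y i\<rfloor>) = y i" for i
  proof -
    obtain z where z: "y i = of_int z" using y_int by (meson Ints_cases)
    moreover have "0 \<le> y i" unfolding y using matroid_polytope_coordinate_bounds[OF x] by simp
    ultimately show ?thesis by simp
  qed
  have "y i \<le> real t" for i
    unfolding y using matroid_polytope_coordinate_bounds[OF x, of i] t by (simp add: mult_left_le)
  then have bounded: "nat \<lfloor>y i\<rfloor> \<le> t" for i
    by (metis of_nat_le_iff y_nat)
  have prefix: "real (prefix_sum ys j) = real t * (\<Sum>i\<in>{1..j}. x i)" if "j \<le> n" for j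
    unfolding ys_def prefix_sum_map_upt[OF that] using y_nat by (simp add: y sum_distrib_left)
  have "ys \<in> dominating_points n S t"
    unfolding dominating_points_def
  proof (intro CollectI conjI allI impI)
    show "length ys = n" "\<forall>y\<in>set ys. y \<le> t" unfolding ys_def using bounded by auto
    fix j assume "j \<le> n"
    then show "t * card (S \<inter> {1..j}) \<le> prefix_sum ys j"
      using prefix schubert_polytope_sums(2)[OF S x, of j] t
      by (metis mult_left_mono of_nat_0_le_iff of_nat_le_iff of_nat_mult)
  next
    show "prefix_sum ys n = t * card S"
      using prefix[OF order_refl] schubert_polytope_sums(3)[OF S x] by (metis of_nat_eq_iff of_nat_mult)
  qed
  moreover have "vector_of_list n ys = y"
  proof
    fix i
    show "vector_of_list n ys i = y i"
    proof (cases "i \<in> {1..n}")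
      case True
      then have "ys ! (i - 1) = nat \<lfloor>y i\<rfloor>" unfolding ys_def by (auto simp del: upt_Suc)
      then show ?thesis using True y_nat by (simp add: vector_of_list_def)
    next
      case False
      then show ?thesis using schubert_polytope_sums(1)[OF S x] by (auto simp: vector_of_list_def y)
    qed
  qed
  ultimately show ?thesis by blast
qed

lemma ehrhart_schubert_eq_card_dominating_points:
  assumes S: "S \<subseteq> {1..n}" and t: "0 < t"
  shows "ehrhart_schubert n S t = card (dominating_points n S t)"
proof -
  have "{y. (\<forall>i. y i \<in> \<int>) \<and> (\<exists>x\<in>matroid_polytope (schubert_bases n S). y = (\<lambda>i. real t * x i))}
      = vector_of_list n ` dominating_points n S t"
    using dilate_lattice_point_mem_image[OF S t] dominating_point_mem_dilate[OF S t]
    by (auto simp: vector_of_list_def)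
  moreover have "inj_on (vector_of_list n) (dominating_points n S t)"
  proof (rule inj_onI)
    fix ys zs assume "ys \<in> dominating_points n S t" "zs \<in> dominating_points n S t"
      and eq: "vector_of_list n ys = vector_of_list n zs"
    then have "length ys = n" "length zs = n" unfolding dominating_points_def by auto
    moreover have "ys ! i = zs ! i" if "i < n" for i
      using fun_cong[OF eq, of "Suc i"] that by (simp add: vector_of_list_def)
    ultimately show "ys = zs" by (simp add: nth_equalityI)
  qed
  ultimately show ?thesis unfolding ehrhart_schubert_def lattice_count_def by (simp add: card_image)
qed

section \<open>Cutting along the blocks of \<open>S\<close>\<close>

definition count_true :: "bool list \<Rightarrow> nat" where
  "count_true ps = length (filter id ps)"

lemma count_true_append [simp]: "count_true (xs @ ys) = count_true xs + count_true ys"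
  unfolding count_true_def by simp

lemma prefix_sum_append:
  "prefix_sum (p @ q) j = (if j \<le> length p then prefix_sum p j else sum_list p + prefix_sum q (j - length p))"
  unfolding prefix_sum_def by simp

text \<open>The surplus \<open>e\<close> is what the blocks to the left have accumulated beyond their demand.\<close>
definition dominates :: "nat \<Rightarrow> bool list \<Rightarrow> int \<Rightarrow> nat list \<Rightarrow> bool" where
  "dominates t ps e ys \<longleftrightarrow> length ys = length ps \<and> (\<forall>y\<in>set ys. y \<le> t) \<and>
     (\<forall>j\<le>length ps. int t * int (count_true (take j ps)) \<le> e + int (prefix_sum ys j))"

definition dominating_vectors :: "nat \<Rightarrow> bool list \<Rightarrow> int \<Rightarrow> nat list set" where
  "dominating_vectors t ps e =
     {ys. dominates t ps e ys \<and> e + int (sum_list ys) = int t * int (count_true ps)}"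

lemma all_le_add_iff: "(\<forall>j\<le>m + n. P j) \<longleftrightarrow> (\<forall>j\<le>m. P j) \<and> (\<forall>k\<le>n. P (m + k))"
  for m n :: nat
proof (intro iffI conjI allI impI)
  fix j assume all: "(\<forall>j\<le>m. P j) \<and> (\<forall>k\<le>n. P (m + k))" and j: "j \<le> m + n"
  show "P j"
  proof (cases "j \<le> m")
    case False
    then have "j = m + (j - m)" "j - m \<le> n" using j by auto
    then show ?thesis using all by metis
  qed (use all in simp)
qed auto

lemma dominates_append:
  assumes "length p = length ps"
  shows "dominates t (ps @ ps') e (p @ q) \<longleftrightarrow>
    dominates t ps e p \<and> dominates t ps' (e + int (sum_list p) - int t * int (count_true ps)) q"
proof -
  have low: "count_true (take j (ps @ ps')) = count_true (take j ps)"
    "prefix_sum (p @ q) j = prefix_sum p j" if "j \<le> length ps" for j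
    using that assms by (simp_all add: prefix_sum_append)
  have high: "count_true (take (length ps + k) (ps @ ps')) = count_true ps + count_true (take k ps')"
    "prefix_sum (p @ q) (length ps + k) = sum_list p + prefix_sum q k" for k
    using assms by (simp_all add: prefix_sum_append prefix_sum_def)
  show ?thesis
    unfolding dominates_def length_append all_le_add_iff
    using assms by (auto simp: low high) (auto simp: algebra_simps)
qed

definition block :: "nat \<Rightarrow> nat \<Rightarrow> bool list" where
  "block a b = replicate a False @ replicate b True"

lemma length_block [simp]: "length (block a b) = a + b"
  unfolding block_def by simp

lemma count_true_block [simp]: "count_true (block a b) = b"
  unfolding count_true_def block_def by simp

lemma count_true_take_block: "count_true (take j (block a b)) = min j (a + b) - a"
  unfolding count_true_def block_def by (auto simp: min_def)

lemma sum_list_le_length_mult: "\<forall>y\<in>set ys. y \<le> t \<Longrightarrow> sum_list ys \<le> t * length ys"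
  by (induction ys) auto

text \<open>Within a block only the two ends matter: along the run of ones the demand grows by \<open>t\<close>
  per step, faster than any entry of \<open>p\<close>.\<close>
lemma dominates_block_iff:
  assumes "length p = a + b" "\<forall>y\<in>set p. y \<le> t"
  shows "dominates t (block a b) e p \<longleftrightarrow> 0 \<le> e \<and> int t * int b \<le> e + int (sum_list p)"
proof
  assume "dominates t (block a b) e p"
  then have "\<forall>j\<le>a + b. int t * int (min j (a + b) - a) \<le> e + int (prefix_sum p j)"
    unfolding dominates_def count_true_take_block by simp
  from this[rule_format, of 0] this[rule_format, of "a + b"] assms(1)
  show "0 \<le> e \<and> int t * int b \<le> e + int (sum_list p)" by (simp add: prefix_sum_def)
next
  assume ends: "0 \<le> e \<and> int t * int b \<le> e + int (sum_list p)"
  have "int t * int (j - a) \<le> e + int (prefix_sum p j)" if j: "j \<le> a + b" for j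
  proof (cases "j \<le> a")
    case False
    have "sum_list (drop j p) \<le> t * (a + b - j)"
      using sum_list_le_length_mult[of "drop j p" t] assms by (simp add: in_set_dropD)
    moreover have "sum_list p = prefix_sum p j + sum_list (drop j p)"
      unfolding prefix_sum_def by (metis append_take_drop_id sum_list_append)
    ultimately have "sum_list p \<le> prefix_sum p j + t * (a + b - j)" by linarith
    then have "int (sum_list p) \<le> int (prefix_sum p j) + int t * int (a + b - j)"
      by (metis of_nat_add of_nat_le_iff of_nat_mult)
    moreover have "int (a + b - j) = int a + int b - int j" using j by simp
    ultimately have "int (sum_list p) \<le> int (prefix_sum p j) + int t * (int a + int b - int j)"
      by simp
    then show ?thesis using ends False j by (simp add: of_nat_diff algebra_simps)
  qed (use ends in simp)
  then show "dominates t (block a b) e p"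
    unfolding dominates_def count_true_take_block using assms by auto
qed

lemma dominates_Nil_iff: "dominates t [] e ys \<longleftrightarrow> ys = [] \<and> 0 \<le> e"
  unfolding dominates_def count_true_def prefix_sum_def by auto

lemma dominates_imp_nonneg:
  assumes "dominates t ps e ys"
  shows "0 \<le> e"
proof -
  have "int t * int (count_true (take 0 ps)) \<le> e + int (prefix_sum ys 0)"
    using assms unfolding dominates_def by blast
  then show ?thesis by (simp add: prefix_sum_def count_true_def)
qed

lemma mem_dominating_vectors_block_append:
  "ys \<in> dominating_vectors t (block a b @ ps) e \<longleftrightarrow> 0 \<le> e \<and>
    (\<exists>p q. ys = p @ q \<and> length p = a + b \<and> (\<forall>y\<in>set p. y \<le> t) \<and>
       q \<in> dominating_vectors t ps (e + int (sum_list p) - int t * int b))"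
  (is "?lhs \<longleftrightarrow> ?rhs")
proof
  assume ys: ?lhs
  define p q where "p = take (a + b) ys" and "q = drop (a + b) ys"
  have dom: "dominates t (block a b @ ps) e ys"
    and total: "e + int (sum_list ys) = int t * int (b + count_true ps)"
    using ys unfolding dominating_vectors_def by auto
  have p: "length p = a + b" "ys = p @ q" "\<forall>y\<in>set p. y \<le> t"
    using dom unfolding p_def q_def dominates_def by (auto dest: in_set_takeD)
  then have "dominates t (block a b) e p" "dominates t ps (e + int (sum_list p) - int t * int b) q"
    using dom dominates_append[of p "block a b"] by simp_all
  moreover have "e + int (sum_list p) - int t * int b + int (sum_list q) = int t * int (count_true ps)"
    using total p(2) by (simp add: algebra_simps)
  ultimately show ?rhs
    using p dominates_imp_nonneg unfolding dominating_vectors_def by blast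
next
  assume ?rhs
  then obtain p q where ys: "ys = p @ q" and p: "length p = a + b" "\<forall>y\<in>set p. y \<le> t"
    and q: "q \<in> dominating_vectors t ps (e + int (sum_list p) - int t * int b)"
    and e: "0 \<le> e"
    by blast
  have q_dom: "dominates t ps (e + int (sum_list p) - int t * int b) q"
    using q unfolding dominating_vectors_def by simp
  then have "dominates t (block a b) e p"
    using dominates_imp_nonneg[OF q_dom] dominates_block_iff[OF p] e by simp
  then have "dominates t (block a b @ ps) e ys"
    using q_dom dominates_append[OF p(1)[folded length_block], where ps' = ps and e = e and q = q] ys by simp
  moreover have "e + int (sum_list ys) = int t * int (count_true (block a b @ ps))"
    using q ys unfolding dominating_vectors_def by (simp add: algebra_simps)
  ultimately show ?lhs unfolding dominating_vectors_def by simp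
qed

lemma finite_dominating_vectors: "finite (dominating_vectors t ps e)"
  by (rule finite_subset[OF _ finite_lists_bounded[of "length ps" t]])
     (auto simp: dominating_vectors_def dominates_def)

lemma dominating_vectors_block_append_eq_UN:
  assumes "0 \<le> e"
  shows "dominating_vectors t (block a b @ ps) e = (\<Union>c\<in>{-(int t * int b)..int t * int a}.
    (\<lambda>(p, q). p @ q) ` (bounded_vectors t (a + b) (int t * int b + c) \<times> dominating_vectors t ps (e + c)))"
    (is "_ = (\<Union>c\<in>_. ?U c)")
proof (rule set_eqI, rule iffI)
  have U_iff: "ys \<in> ?U c \<longleftrightarrow> (\<exists>p q. ys = p @ q \<and> length p = a + b \<and> (\<forall>y\<in>set p. y \<le> t) \<and>
      int (sum_list p) = int t * int b + c \<and> q \<in> dominating_vectors t ps (e + c))" for ys c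
    unfolding bounded_vectors_def by auto
  {
    fix ys assume "ys \<in> dominating_vectors t (block a b @ ps) e"
    then obtain p q where ys: "ys = p @ q" and p: "length p = a + b" "\<forall>y\<in>set p. y \<le> t"
      and q: "q \<in> dominating_vectors t ps (e + int (sum_list p) - int t * int b)"
      unfolding mem_dominating_vectors_block_append by blast
    define c where "c = int (sum_list p) - int t * int b"
    have "sum_list p \<le> t * (a + b)" using sum_list_le_length_mult[OF p(2)] p(1) by simp
    then have "int (sum_list p) \<le> int t * (int a + int b)"
      by (metis of_nat_add of_nat_le_iff of_nat_mult)
    then have "c \<in> {-(int t * int b)..int t * int a}" unfolding c_def by (simp add: algebra_simps)
    moreover have "ys = p @ q \<and> length p = a + b \<and> (\<forall>y\<in>set p. y \<le> t) \<and>
        int (sum_list p) = int t * int b + c \<and> q \<in> dominating_vectors t ps (e + c)"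
      using ys p q unfolding c_def by (simp add: add_diff_eq)
    ultimately show "ys \<in> (\<Union>c\<in>{-(int t * int b)..int t * int a}. ?U c)"
      unfolding UN_iff U_iff by blast
  next
    fix ys assume "ys \<in> (\<Union>c\<in>{-(int t * int b)..int t * int a}. ?U c)"
    then obtain c where "ys \<in> ?U c" by blast
    then obtain p q where ys: "ys = p @ q" "length p = a + b" "\<forall>y\<in>set p. y \<le> t"
      and c: "int (sum_list p) = int t * int b + c" and q: "q \<in> dominating_vectors t ps (e + c)"
      unfolding U_iff by blast
    have "q \<in> dominating_vectors t ps (e + int (sum_list p) - int t * int b)"
      using q c by (simp add: algebra_simps)
    then show "ys \<in> dominating_vectors t (block a b @ ps) e"
      unfolding mem_dominating_vectors_block_append using assms ys by blast
  }
qed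

lemma card_image_append_times:
  assumes "\<forall>p\<in>A. length p = L"
  shows "card ((\<lambda>(p, q). p @ q) ` (A \<times> B)) = card A * card B"
proof -
  have "inj_on (\<lambda>(p, q). p @ q) (A \<times> B)"
  proof (rule inj_onI)
    fix x y assume "x \<in> A \<times> B" "y \<in> A \<times> B" and eq: "(\<lambda>(p, q). p @ q) x = (\<lambda>(p, q). p @ q) y"
    moreover obtain p q p' q' where xy: "x = (p, q)" "y = (p', q')" by (cases x, cases y)
    ultimately have "length p = length p'" "p @ q = p' @ q'" using assms by auto
    then show "x = y" unfolding xy by simp
  qed
  then show ?thesis by (simp add: card_image card_cartesian_product)
qed

lemma card_dominating_vectors_block_append:
  "card (dominating_vectors t (block a b @ ps) e) = (if 0 \<le> e then
     (\<Sum>c\<in>{-(int t * int b)..int t * int a}.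
        card (bounded_vectors t (a + b) (int t * int b + c)) * card (dominating_vectors t ps (e + c)))
   else 0)"
proof (cases "0 \<le> e")
  case True
  define U where "U c = (\<lambda>(p, q). p @ q) `
    (bounded_vectors t (a + b) (int t * int b + c) \<times> dominating_vectors t ps (e + c))" for c
  have "\<forall>p\<in>bounded_vectors t (a + b) d. length p = a + b" for d
    unfolding bounded_vectors_def by simp
  then have card_U: "card (U c) = card (bounded_vectors t (a + b) (int t * int b + c)) * card (dominating_vectors t ps (e + c))" for c
    unfolding U_def by (rule card_image_append_times)
  have "U c \<inter> U c' = {}" if "c \<noteq> c'" for c c'
  proof (rule equals0I)
    fix ys assume ys: "ys \<in> U c \<inter> U c'"
    obtain p q where "ys = p @ q" "p \<in> bounded_vectors t (a + b) (int t * int b + c)"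
      using ys unfolding U_def by auto
    moreover obtain p' q' where "ys = p' @ q'" "p' \<in> bounded_vectors t (a + b) (int t * int b + c')"
      using ys unfolding U_def by auto
    ultimately show False using that unfolding bounded_vectors_def by auto
  qed
  moreover have "finite (U c)" for c unfolding U_def by (simp add: finite_bounded_vectors finite_dominating_vectors)
  ultimately have "card (\<Union>c\<in>{-(int t * int b)..int t * int a}. U c) = (\<Sum>c\<in>{-(int t * int b)..int t * int a}. card (U c))"
    by (intro card_UN_disjoint) auto
  then show ?thesis
    using True by (simp add: dominating_vectors_block_append_eq_UN[OF True] U_def[symmetric] card_U)
next
  case False
  then have "dominating_vectors t (block a b @ ps) e = {}"
    using mem_dominating_vectors_block_append by blast
  then show ?thesis using False by simp
qed

text \<open>\<open>c_j\<close> is the excess of the sum over the \<open>j\<close>-th block over \<open>t\<close> times its number of ones,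
  and \<open>e\<close> the initial surplus.\<close>
definition block_shifts :: "nat \<Rightarrow> (nat \<times> nat) list \<Rightarrow> int \<Rightarrow> int list set" where
  "block_shifts t bl e = {cs. length cs = length bl \<and>
     (\<forall>j<length bl. -(int t * int (snd (bl ! j))) \<le> cs ! j \<and> cs ! j \<le> int t * int (fst (bl ! j))) \<and>
     (\<forall>j\<le>length bl. 0 \<le> e + sum_list (take j cs)) \<and> e + sum_list cs = 0}"

definition block_weight :: "nat \<Rightarrow> (nat \<times> nat) list \<Rightarrow> int list \<Rightarrow> int" where
  "block_weight t bl cs = (\<Prod>j<length bl. FF (fst (bl ! j)) (snd (bl ! j)) (cs ! j) t)"

definition blocks :: "(nat \<times> nat) list \<Rightarrow> bool list" where
  "blocks bl = concat (map (\<lambda>(a, b). block a b) bl)"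

lemma all_le_Suc_iff: "(\<forall>j\<le>Suc n. P j) \<longleftrightarrow> P 0 \<and> (\<forall>j\<le>n. P (Suc j))"
  using All_less_Suc2[of "Suc n" P] by (simp add: less_Suc_eq_le)

lemma block_shifts_Nil: "block_shifts t [] e = (if e = 0 then {[]} else {})"
  unfolding block_shifts_def by auto

lemma Cons_mem_block_shifts_iff:
  "c # cs \<in> block_shifts t ((a, b) # bl) e \<longleftrightarrow>
    0 \<le> e \<and> -(int t * int b) \<le> c \<and> c \<le> int t * int a \<and> cs \<in> block_shifts t bl (e + c)"
  unfolding block_shifts_def length_Cons All_less_Suc2 all_le_Suc_iff by (auto simp: algebra_simps)

lemma block_shifts_Cons:
  "block_shifts t ((a, b) # bl) e = (if 0 \<le> e then
     (\<Union>c\<in>{-(int t * int b)..int t * int a}. (#) c ` block_shifts t bl (e + c)) else {})"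
proof (rule set_eqI)
  fix cs
  have "[] \<notin> block_shifts t ((a, b) # bl) e" unfolding block_shifts_def by simp
  then show "cs \<in> block_shifts t ((a, b) # bl) e \<longleftrightarrow>
    cs \<in> (if 0 \<le> e then (\<Union>c\<in>{-(int t * int b)..int t * int a}. (#) c ` block_shifts t bl (e + c)) else {})"
    by (cases cs) (auto simp: Cons_mem_block_shifts_iff)
qed

lemma finite_block_shifts: "finite (block_shifts t bl e)"
proof (induction bl arbitrary: e)
  case (Cons ab bl)
  then show ?case by (cases ab) (simp add: block_shifts_Cons)
qed (simp add: block_shifts_Nil)

lemma sum_block_weight_Cons:
  "(\<Sum>cs\<in>block_shifts t ((a, b) # bl) e. block_weight t ((a, b) # bl) cs) = (if 0 \<le> e then
     (\<Sum>c\<in>{-(int t * int b)..int t * int a}. FF a b c t * (\<Sum>cs\<in>block_shifts t bl (e + c). block_weight t bl cs))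
   else 0)"
proof (cases "0 \<le> e")
  case True
  have weight: "block_weight t ((a, b) # bl) (c # cs) = FF a b c t * block_weight t bl cs" for c cs
    unfolding block_weight_def by (simp only: length_Cons prod.lessThan_Suc_shift) simp
  have "(\<Sum>cs\<in>block_shifts t ((a, b) # bl) e. block_weight t ((a, b) # bl) cs) =
      (\<Sum>c\<in>{-(int t * int b)..int t * int a}. \<Sum>cs\<in>(#) c ` block_shifts t bl (e + c). block_weight t ((a, b) # bl) cs)"
    unfolding block_shifts_Cons if_P[OF True] by (intro sum.UNION_disjoint) (auto simp: finite_block_shifts)
  also have "\<dots> = (\<Sum>c\<in>{-(int t * int b)..int t * int a}. FF a b c t * (\<Sum>cs\<in>block_shifts t bl (e + c). block_weight t bl cs))"
    by (simp add: sum.reindex weight sum_distrib_left)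
  finally show ?thesis using True by simp
qed (simp add: block_shifts_Cons)

lemma card_dominating_vectors_blocks:
  assumes "\<forall>(a, b)\<in>set bl. 1 \<le> a + b"
  shows "int (card (dominating_vectors t (blocks bl) e)) = (\<Sum>cs\<in>block_shifts t bl e. block_weight t bl cs)"
  using assms
proof (induction bl arbitrary: e)
  case Nil
  have "dominating_vectors t [] e = (if e = 0 then {[]} else {})"
    unfolding dominating_vectors_def dominates_Nil_iff by (auto simp: count_true_def)
  then show ?case by (simp add: blocks_def block_shifts_Nil block_weight_def)
next
  case (Cons ab bl)
  obtain a b where ab: "ab = (a, b)" by (cases ab)
  have "1 \<le> a + b" using Cons.prems ab by simp
  then have "int (card (dominating_vectors t (blocks (ab # bl)) e)) = (if 0 \<le> e then
     (\<Sum>c\<in>{-(int t * int b)..int t * int a}. FF a b c t * int (card (dominating_vectors t (blocks bl) (e + c))))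
     else 0)"
    unfolding ab blocks_def by (simp add: card_dominating_vectors_block_append FF_eq_card_bounded_vectors)
  also have "\<dots> = (\<Sum>cs\<in>block_shifts t (ab # bl) e. block_weight t (ab # bl) cs)"
    using Cons unfolding ab sum_block_weight_Cons by simp
  finally show ?case .
qed

section \<open>The admissible vectors\<close>

lemma sum_list_take_eq_sum_nth: "j \<le> length cs \<Longrightarrow> sum_list (take j cs) = (\<Sum>i<j. cs ! i)"
  by (simp add: sum_list_sum_nth atLeast0LessThan min_def)

lemma block_shifts_le_later:
  assumes cs: "cs \<in> block_shifts t bl 0" and k: "k < length bl"
  shows "cs ! k \<le> int t * int (\<Sum>i\<in>{Suc k..<length bl}. snd (bl ! i))"
proof -
  have len: "length cs = length bl"
    and lower: "\<And>i. i < length bl \<Longrightarrow> -(int t * int (snd (bl ! i))) \<le> cs ! i"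
    and prefix: "0 \<le> sum_list (take k cs)" and total: "sum_list cs = 0"
    using cs k unfolding block_shifts_def by auto
  have "(\<Sum>i<length bl. cs ! i) = (\<Sum>i<Suc k. cs ! i) + (\<Sum>i\<in>{Suc k..<length bl}. cs ! i)"
    using sum.atLeastLessThan_concat[of 0 "Suc k" "length bl" "(!) cs"] k by (simp add: lessThan_atLeast0)
  then have "(\<Sum>i<length bl. cs ! i) = (\<Sum>i<k. cs ! i) + cs ! k + (\<Sum>i\<in>{Suc k..<length bl}. cs ! i)"
    by simp
  moreover have "(\<Sum>i<length bl. cs ! i) = 0" "0 \<le> (\<Sum>i<k. cs ! i)"
    using total prefix len k sum_list_take_eq_sum_nth[of "length cs" cs] sum_list_take_eq_sum_nth[of k cs]
    by simp_all
  moreover have "(\<Sum>i\<in>{Suc k..<length bl}. - cs ! i) \<le> (\<Sum>i\<in>{Suc k..<length bl}. int t * int (snd (bl ! i)))"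
  proof (rule sum_mono)
    fix i assume "i \<in> {Suc k..<length bl}"
    then show "- cs ! i \<le> int t * int (snd (bl ! i))" using lower[of i] by simp
  qed
  ultimately show ?thesis by (simp add: sum_negf sum_distrib_left)
qed

lemma block_shifts_ge_earlier:
  assumes cs: "cs \<in> block_shifts t bl 0" and k: "k < length bl"
  shows "-(int t * int (\<Sum>i<k. fst (bl ! i))) \<le> cs ! k"
proof -
  have len: "length cs = length bl"
    and upper: "\<And>i. i < length bl \<Longrightarrow> cs ! i \<le> int t * int (fst (bl ! i))"
    and prefix: "0 \<le> sum_list (take (Suc k) cs)"
    using cs k unfolding block_shifts_def by auto
  have "0 \<le> (\<Sum>i<k. cs ! i) + cs ! k"
    using prefix sum_list_take_eq_sum_nth[of "Suc k" cs] len k by simp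
  moreover have "(\<Sum>i<k. cs ! i) \<le> (\<Sum>i<k. int t * int (fst (bl ! i)))"
    using upper k by (intro sum_mono) simp
  ultimately show ?thesis by (simp add: sum_distrib_left)
qed

text \<open>The \<open>k\<close>-th pair is \<open>(r_{2k+1}, r_{2k+2})\<close>, counting \<open>k\<close> from \<open>0\<close>.\<close>
definition block_pairs :: "nat list \<Rightarrow> (nat \<times> nat) list" where
  "block_pairs rs = map (\<lambda>k. (rs ! (2 * k), rs ! (2 * k + 1))) [0..<length rs div 2]"

lemma u_of_Suc:
  assumes "length rs = 2 * m"
  shows "u_of rs (Suc k) = min (rs ! (2 * k)) (\<Sum>i\<in>{Suc k..<m}. rs ! (2 * i + 1))"
proof -
  have "(\<Sum>j\<in>{Suc k + 1..m}. rr rs (2 * j)) = (\<Sum>j\<in>{Suc (Suc k)..<Suc m}. rr rs (2 * j))"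
    by (rule sum.cong) auto
  also have "\<dots> = (\<Sum>i\<in>{Suc k..<m}. rs ! (2 * i + 1))"
    unfolding sum.atLeast_Suc_lessThan_Suc_shift by (simp add: rr_def)
  finally show ?thesis unfolding u_of_def rr_def using assms by simp
qed

lemma v_of_Suc: "v_of rs (Suc k) = min (rs ! (2 * k + 1)) (\<Sum>i<k. rs ! (2 * i))"
proof -
  have "(\<Sum>j\<in>{1..<Suc k}. rr rs (2 * j - 1)) = (\<Sum>i<k. rs ! (2 * i))"
    unfolding One_nat_def sum.atLeast_Suc_lessThan_Suc_shift by (simp add: rr_def atLeast0LessThan)
  then show ?thesis unfolding v_of_def rr_def by simp
qed

lemma mem_admissible_c_iff:
  assumes "length rs = 2 * m"
  shows "cs \<in> admissible_c rs t \<longleftrightarrow> length cs = m \<and> sum_list cs = 0 \<and>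
    (\<forall>k<m. -(int t * int (v_of rs (Suc k))) \<le> cs ! k \<and> cs ! k \<le> int t * int (u_of rs (Suc k)) \<and>
      0 \<le> sum_list (take (Suc k) cs))"
proof -
  have ball: "(\<forall>j\<in>{1..m}. P j) \<longleftrightarrow> (\<forall>k<m. P (Suc k))" for P
  proof
    assume all: "\<forall>k<m. P (Suc k)"
    show "\<forall>j\<in>{1..m}. P j"
    proof
      fix j assume "j \<in> {1..m}"
      then obtain k where "j = Suc k" "k < m" by (cases j) auto
      then show "P j" using all by simp
    qed
  qed auto
  have m: "length rs div 2 = m" using assms by simp
  show ?thesis unfolding admissible_c_def m ball by simp
qed

lemma mem_block_shifts_block_pairs_iff:
  assumes "length rs = 2 * m"
  shows "cs \<in> block_shifts t (block_pairs rs) 0 \<longleftrightarrow> length cs = m \<and> sum_list cs = 0 \<and>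
    (\<forall>k<m. -(int t * int (rs ! (2 * k + 1))) \<le> cs ! k \<and> cs ! k \<le> int t * int (rs ! (2 * k))) \<and>
    (\<forall>j\<le>m. 0 \<le> sum_list (take j cs))"
proof -
  have "(\<forall>j<m. -(int t * int (snd (block_pairs rs ! j))) \<le> cs ! j \<and> cs ! j \<le> int t * int (fst (block_pairs rs ! j)))
      \<longleftrightarrow> (\<forall>k<m. -(int t * int (rs ! (2 * k + 1))) \<le> cs ! k \<and> cs ! k \<le> int t * int (rs ! (2 * k)))"
    using assms by (simp add: block_pairs_def)
  moreover have "length (block_pairs rs) = m" using assms by (simp add: block_pairs_def)
  ultimately show ?thesis unfolding block_shifts_def mem_Collect_eq add_0 by metis
qed

text \<open>The bounds \<open>-t v_j \<le> c_j \<le> t u_j\<close> of the admissibility condition are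
  redundant: they follow from the block bounds and the prefix conditions.\<close>
lemma admissible_c_eq_block_shifts:
  assumes len: "length rs = 2 * m"
  shows "admissible_c rs t = block_shifts t (block_pairs rs) 0"
proof (rule set_eqI, rule iffI)
  note admissible = mem_admissible_c_iff[OF len] and shifts = mem_block_shifts_block_pairs_iff[OF len]
  fix cs assume "cs \<in> admissible_c rs t"
  then have length: "length cs = m" and total: "sum_list cs = 0"
    and cond: "\<And>k. k < m \<Longrightarrow> -(int t * int (v_of rs (Suc k))) \<le> cs ! k \<and>
        cs ! k \<le> int t * int (u_of rs (Suc k)) \<and> 0 \<le> sum_list (take (Suc k) cs)"
    unfolding admissible by auto
  have "-(int t * int (rs ! (2 * k + 1))) \<le> cs ! k \<and> cs ! k \<le> int t * int (rs ! (2 * k))" if "k < m" for k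
  proof -
    have "int t * int (v_of rs (Suc k)) \<le> int t * int (rs ! (2 * k + 1))"
      "int t * int (u_of rs (Suc k)) \<le> int t * int (rs ! (2 * k))"
      unfolding v_of_Suc u_of_Suc[OF len] by (simp_all add: mult_left_mono)
    then show ?thesis using cond[OF that] by linarith
  qed
  moreover have "0 \<le> sum_list (take j cs)" if "j \<le> m" for j
    using cond[of "j - 1"] that by (cases j) auto
  ultimately show "cs \<in> block_shifts t (block_pairs rs) 0"
    unfolding shifts using length total by blast
next
  note admissible = mem_admissible_c_iff[OF len] and shifts = mem_block_shifts_block_pairs_iff[OF len]
  fix cs assume cs: "cs \<in> block_shifts t (block_pairs rs) 0"
  have "-(int t * int (v_of rs (Suc k))) \<le> cs ! k \<and> cs ! k \<le> int t * int (u_of rs (Suc k))" if k: "k < m" for k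
  proof -
    have "(\<Sum>i\<in>{Suc k..<m}. snd (block_pairs rs ! i)) = (\<Sum>i\<in>{Suc k..<m}. rs ! (2 * i + 1))"
      "(\<Sum>i<k. fst (block_pairs rs ! i)) = (\<Sum>i<k. rs ! (2 * i))"
      "length (block_pairs rs) = m"
      using k len by (auto intro!: sum.cong simp: block_pairs_def)
    then have "cs ! k \<le> int t * int (\<Sum>i\<in>{Suc k..<m}. rs ! (2 * i + 1))"
      "-(int t * int (\<Sum>i<k. rs ! (2 * i))) \<le> cs ! k"
      using block_shifts_le_later[OF cs, of k] block_shifts_ge_earlier[OF cs, of k] k by simp_all
    moreover have "-(int t * int (rs ! (2 * k + 1))) \<le> cs ! k" "cs ! k \<le> int t * int (rs ! (2 * k))"
      using cs k unfolding shifts by simp_all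
    ultimately show ?thesis unfolding v_of_Suc u_of_Suc[OF len]
      by (intro conjI; cases "rs ! (2 * k + 1) \<le> (\<Sum>i<k. rs ! (2 * i))";
          cases "rs ! (2 * k) \<le> (\<Sum>i\<in>{Suc k..<m}. rs ! (2 * i + 1))") (simp_all only: min_def if_True if_False)
  qed
  moreover have "length cs = m" "sum_list cs = 0" "\<And>k. k < m \<Longrightarrow> 0 \<le> sum_list (take (Suc k) cs)"
    using cs unfolding shifts by (simp_all add: Suc_leI)
  ultimately show "cs \<in> admissible_c rs t" unfolding admissible by (intro conjI allI impI) simp_all
qed

lemma block_weight_block_pairs:
  "block_weight t (block_pairs rs) cs =
    (\<Prod>j = 1..length rs div 2. FF (rr rs (2*j - 1)) (rr rs (2*j)) (cs ! (j-1)) t)"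
proof -
  have "(\<Prod>j = 1..length rs div 2. FF (rr rs (2*j - 1)) (rr rs (2*j)) (cs ! (j-1)) t) =
      (\<Prod>k\<in>{0..<length rs div 2}. FF (rs ! (2 * k)) (rs ! (2 * k + 1)) (cs ! k) t)"
    unfolding atLeastLessThanSuc_atLeastAtMost[symmetric] One_nat_def prod.atLeast_Suc_lessThan_Suc_shift
    by (simp add: rr_def)
  then show ?thesis unfolding block_weight_def block_pairs_def atLeast0LessThan by simp
qed

lemma replicate_blocks_eq_blocks:
  "concat (map (\<lambda>k. replicate (rs ! k) (odd k)) [0..<2 * m]) =
    blocks (map (\<lambda>k. (rs ! (2 * k), rs ! (2 * k + 1))) [0..<m])"
proof (induction m)
  case (Suc m)
  have "[0..<2 * Suc m] = [0..<2 * m] @ [2 * m, 2 * m + 1]" by (simp add: upt_Suc_append)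
  then show ?case using Suc by (simp add: blocks_def block_def)
qed (simp add: blocks_def)

lemma is_r_of_blocks:
  assumes "is_r_of n S rs"
  shows "map (\<lambda>i. i \<in> S) [1..<n+1] = blocks (block_pairs rs)"
    and "\<forall>(a, b)\<in>set (block_pairs rs). 1 \<le> a + b"
proof -
  obtain m where len: "length rs = 2 * m" using assms unfolding is_r_of_def by blast
  show "map (\<lambda>i. i \<in> S) [1..<n+1] = blocks (block_pairs rs)"
    using assms replicate_blocks_eq_blocks[of rs m] len unfolding is_r_of_def block_pairs_def by simp
  have "0 < rs ! (2 * k + 1)" if "k < m" for k using assms len that unfolding is_r_of_def by simp
  then show "\<forall>(a, b)\<in>set (block_pairs rs). 1 \<le> a + b"
    using len unfolding block_pairs_def by fastforce
qed

lemma count_true_take_indicator: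
  assumes "j \<le> n"
  shows "count_true (take j (map (\<lambda>i. i \<in> S) [1..<n+1])) = card (S \<inter> {1..j})"
proof -
  have "take j [1..<n+1] = [1..<1+j]" by (rule take_upt) (use assms in simp)
  then have "count_true (take j (map (\<lambda>i. i \<in> S) [1..<n+1])) = length (filter (\<lambda>i. i \<in> S) [1..<1+j])"
    unfolding count_true_def take_map by (simp add: filter_map comp_def)
  also have "\<dots> = card (S \<inter> {1..j})"
    by (subst distinct_length_filter) (auto intro: arg_cong[where f = card])
  finally show ?thesis .
qed

lemma dominating_points_eq_dominating_vectors:
  assumes S: "S \<subseteq> {1..n}"
  shows "dominating_points n S t = dominating_vectors t (map (\<lambda>i. i \<in> S) [1..<n+1]) 0"
proof -
  define ps where "ps = map (\<lambda>i. i \<in> S) [1..<n+1]"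
  have len: "length ps = n" unfolding ps_def by simp
  have count: "j \<le> n \<Longrightarrow> count_true (take j ps) = card (S \<inter> {1..j})" for j
    unfolding ps_def by (rule count_true_take_indicator)
  have "count_true ps = card S" using count[of n] len S by (simp add: Int_absorb2)
  then show ?thesis
    unfolding dominating_points_def dominating_vectors_def dominates_def ps_def[symmetric]
    using len count by (auto simp: prefix_sum_def simp flip: of_nat_mult)
qed

text \<open>The hypotheses \<open>1 \<le> n\<close> and \<open>n \<in> S\<close> only normalise \<open>r(S)\<close> to end with a run of ones;
  the argument does not use them.\<close>
theorem theorem1p1:
  fixes n :: nat and S :: "nat set" and rs :: "nat list" and t :: nat
  assumes "1 \<le> n" and "S \<subseteq> {1..n}" and "n \<in> S"
    and "is_r_of n S rs"
    and "0 < t"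
  shows "int (ehrhart_schubert n S t) =
    (\<Sum>cs\<in>admissible_c rs t. \<Prod>j = 1..length rs div 2.
        FF (rr rs (2*j - 1)) (rr rs (2*j)) (cs ! (j-1)) t)"
proof -
  obtain m where len: "length rs = 2 * m" using assms(4) unfolding is_r_of_def by blast
  have "int (ehrhart_schubert n S t) = int (card (dominating_vectors t (blocks (block_pairs rs)) 0))"
    unfolding ehrhart_schubert_eq_card_dominating_points[OF assms(2,5)]
      dominating_points_eq_dominating_vectors[OF assms(2)] is_r_of_blocks(1)[OF assms(4)] ..
  also have "\<dots> = (\<Sum>cs\<in>block_shifts t (block_pairs rs) 0. block_weight t (block_pairs rs) cs)"
    by (rule card_dominating_vectors_blocks[OF is_r_of_blocks(2)[OF assms(4)]])
  also have "\<dots> = (\<Sum>cs\<in>admissible_c rs t. block_weight t (block_pairs rs) cs)"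
    unfolding admissible_c_eq_block_shifts[OF len] ..
  finally show ?thesis unfolding block_weight_block_pairs .
qed

end
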